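(* Let $D$ denote the set of variable network games $(v,\rho)\in\mathbb V^N\times\mathbb P^N$ such that $v$ is component additive. Then: (i) the Expected Myerson Value $\Psi^m$ is an allocation rule on the class of variable network games which, on $D$, satisfies component balance and the balanced contributions property; and (ii) if $\Psi\colon\mathbb V^N\times\mathbb P^N\to\mathbb R^N$ is any allocation rule on the class of variable network games satisfying component balance and the balanced contributions property for all $(v,\rho)\in D$, then $\Psi(v,\rho)=\Psi^m(v,\rho)$ for all $(v,\rho)\in D$. That is, $\Psi^m$ is the unique allocation rule on the class of component additive variable network games that satisfies component balance and the balanced contributions property.
   Context: $N=\{1,\dots,n\}$ is a finite player set. A link is an unordered pair $ij=\{i,j\}$ of distinct players; $g_N$ is the set of all links; a network is any $g\subseteq g_N$; $\mathbb G^N$ is the set of all networks. For $g\in\mathbb G^N$: $N_i(g)=\{j\ne i: ij\in g\}$, $L_i(g)=\{ij\in g\}$, $N(g)=\bigcup_i N_i(g)$, and $N_0(g)=N\setminus N(g)$ (isolated players). For $S\subseteq N$, $g|S=\{ij\in g: i,j\in S\}$. A component of $g$ is a nonempty subnetwork $h\subseteq g$ that is connected (any two players of $N(h)$ are joined by a path in $h$) and maximal (if $i\in N(h)$ and $ij\in g$ then $ij\in h$); $C(g)$ is the set of components of $g$. A network formation probability distribution is a map $\rho\colon\mathbb G^N\to[0,1]$ with $\sum_g\rho(g)=1$; $\mathbb P^N$ is the set of these. $\mathbb G(\rho)=\{g:\rho(g)>0\}$, and the extent is $g(\rho)=\bigcup_{g\in\mathbb G(\rho)}g$. For a network $g$,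 the restriction $\rho_g\in\mathbb P^N$ is $\rho_g(h)=\sum_{h'\subseteq g_N\setminus g}\rho(h\cup h')$ if $h\subseteq g$ and $\rho_g(h)=0$ otherwise. For a player $i$, $\rho^{-i}=\rho_{g_N\setminus L_i(g_N)}$. A network game is $v\colon\mathbb G^N\to\mathbb R$ with $v(\varnothing)=0$; $\mathbb V^N$ is the set of these. $v$ is component additive if $v(g)=\sum_{h\in C(g)}v(h)$ for all $g$. A variable network game is a pair $(v,\rho)\in\mathbb V^N\times\mathbb P^N$. An allocation rule on the class of variable network games is a map $\Psi\colon\mathbb V^N\times\mathbb P^N\to\mathbb R^N$ with $\Psi_i(v,\rho)=0$ for every $i\in N_0(g(\rho))$. It is component balanced (on $(v,\rho)$ with $v$ component additive) if for every $h\in C(g(\rho))$: $\sum_{i\in N(h)}\Psi_i(v,\rho)=\sum_{g\in\mathbb G(\rho)}\rho(g)\,v(g\cap h)$. It satisfies the balanced contributions property if for all players $i\ne j$: $\Psi_i(v,\rho)-\Psi_i(v,\rho^{-j})=\Psi_j(v,\rho)-\Psi_j(v,\rho^{-i})$. The Myerson Value for network games is $Y^m_i(v,g)=\sum_{S\subseteq N\setminus\{i\}}\frac{\#S!\,(n-\#S-1)!}{n!}\,[v(g|(S\cup\{i\}))-v(g|S)]$. The Expected Myerson Value is $\Psi^m(v,\rho)=\sum_{g\in\mathbb G^N}\rho(g)\,Y^m(v,g)$. *)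

theory Defs
  imports Complex_Main
begin

(* Players: the elements of a finite type 'a (N = UNIV).
   Links: unordered pairs {i,j} of distinct players.
   Networks: sets of links. *)

definition gN :: "'a set set" where
  "gN = {{i, j} | i j. i \<noteq> j}"

definition nbrs :: "'a set set \<Rightarrow> 'a \<Rightarrow> 'a set" where
  "nbrs g i = {j. j \<noteq> i \<and> {i, j} \<in> g}"

definition links_of :: "'a set set \<Rightarrow> 'a \<Rightarrow> 'a set set" where
  "links_of g i = {l \<in> g. \<exists>j. l = {i, j} \<and> j \<noteq> i}"

definition players :: "'a set set \<Rightarrow> 'a set" where
  "players g = (\<Union>i. nbrs g i)"

definition isolated :: "'a set set \<Rightarrow> 'a set" where
  "isolated g = UNIV - players g"

definition restr :: "'a set set \<Rightarrow> 'a set \<Rightarrow> 'a set set" where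
  "restr g S = {l \<in> g. \<exists>i j. l = {i, j} \<and> i \<in> S \<and> j \<in> S}"

definition adj :: "'a set set \<Rightarrow> ('a \<times> 'a) set" where
  "adj h = {(i, j). i \<noteq> j \<and> {i, j} \<in> h}"

definition net_connected :: "'a set set \<Rightarrow> bool" where
  "net_connected h = (\<forall>i\<in>players h. \<forall>j\<in>players h. (i, j) \<in> (adj h)\<^sup>*)"

definition is_component :: "'a set set \<Rightarrow> 'a set set \<Rightarrow> bool" where
  "is_component h g = (h \<noteq> {} \<and> h \<subseteq> g \<and> net_connected h \<and>
     (\<forall>i\<in>players h. \<forall>j. j \<noteq> i \<and> {i, j} \<in> g \<longrightarrow> {i, j} \<in> h))"

definition comps :: "'a set set \<Rightarrow> 'a set set set" where
  "comps g = {h. is_component h g}"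

definition is_game :: "('a set set \<Rightarrow> real) \<Rightarrow> bool" where
  "is_game v = (v {} = 0)"

definition comp_additive :: "('a set set \<Rightarrow> real) \<Rightarrow> bool" where
  "comp_additive v = (\<forall>g. g \<subseteq> gN \<longrightarrow> v g = (\<Sum>h\<in>comps g. v h))"

definition is_prob :: "('a set set \<Rightarrow> real) \<Rightarrow> bool" where
  "is_prob \<rho> = ((\<forall>g. 0 \<le> \<rho> g \<and> \<rho> g \<le> 1) \<and> (\<forall>g. \<not> g \<subseteq> gN \<longrightarrow> \<rho> g = 0)
                \<and> (\<Sum>g\<in>Pow gN. \<rho> g) = 1)"

definition supp :: "('a set set \<Rightarrow> real) \<Rightarrow> 'a set set set" where
  "supp \<rho> = {g. \<rho> g > 0}"

definition extent :: "('a set set \<Rightarrow> real) \<Rightarrow> 'a set set" where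
  "extent \<rho> = \<Union>(supp \<rho>)"

definition restr_prob :: "('a set set \<Rightarrow> real) \<Rightarrow> 'a set set \<Rightarrow> ('a set set \<Rightarrow> real)" where
  "restr_prob \<rho> g h = (if h \<subseteq> g then (\<Sum>h'\<in>Pow (gN - g). \<rho> (h \<union> h')) else 0)"

definition minus_player :: "('a set set \<Rightarrow> real) \<Rightarrow> 'a \<Rightarrow> ('a set set \<Rightarrow> real)" where
  "minus_player \<rho> i = restr_prob \<rho> (gN - links_of gN i)"

definition myerson :: "('a::finite set set \<Rightarrow> real) \<Rightarrow> 'a set set \<Rightarrow> 'a \<Rightarrow> real" where
  "myerson v g i = (\<Sum>S\<in>Pow (UNIV - {i}).
      (fact (card S) * fact (card (UNIV :: 'a set) - card S - 1) / fact (card (UNIV :: 'a set))) *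
      (v (restr g (S \<union> {i})) - v (restr g S)))"

definition EMV :: "('a::finite set set \<Rightarrow> real) \<Rightarrow> ('a set set \<Rightarrow> real) \<Rightarrow> 'a \<Rightarrow> real" where
  "EMV v \<rho> i = (\<Sum>g\<in>Pow gN. \<rho> g * myerson v g i)"

type_synonym 'a alloc = "('a set set \<Rightarrow> real) \<Rightarrow> ('a set set \<Rightarrow> real) \<Rightarrow> 'a \<Rightarrow> real"

definition alloc_rule :: "'a alloc \<Rightarrow> bool" where
  "alloc_rule \<Psi> = (\<forall>v \<rho>. is_game v \<and> is_prob \<rho> \<longrightarrow>
      (\<forall>i\<in>isolated (extent \<rho>). \<Psi> v \<rho> i = 0))"

definition comp_balanced :: "'a alloc \<Rightarrow> ('a set set \<Rightarrow> real) \<Rightarrow> ('a set set \<Rightarrow> real) \<Rightarrow> bool" where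
  "comp_balanced \<Psi> v \<rho> = (\<forall>h\<in>comps (extent \<rho>).
      (\<Sum>i\<in>players h. \<Psi> v \<rho> i) = (\<Sum>g\<in>supp \<rho>. \<rho> g * v (g \<inter> h)))"

definition bal_contrib :: "'a alloc \<Rightarrow> ('a set set \<Rightarrow> real) \<Rightarrow> ('a set set \<Rightarrow> real) \<Rightarrow> bool" where
  "bal_contrib \<Psi> v \<rho> = (\<forall>i j. i \<noteq> j \<longrightarrow>
      \<Psi> v \<rho> i - \<Psi> v (minus_player \<rho> j) i = \<Psi> v \<rho> j - \<Psi> v (minus_player \<rho> i) j)"

definition domD :: "(('a set set \<Rightarrow> real) \<times> ('a set set \<Rightarrow> real)) set" where
  "domD = {(v, \<rho>). is_game v \<and> is_prob \<rho> \<and> comp_additive v}"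

end

theory Submission
  imports Defs
begin

(* The Myerson value of a network g is the Shapley value of the coalitional game
   S \<mapsto> v (g|S). Shapley efficiency applied to the part of g inside a component h
   gives component balance, and Shapley's balanced contributions transfer because
   deleting all links of j from g turns g|S into g|(S - {j}); both properties
   survive averaging over \<rho>. For uniqueness, induct on the number of links in the
   extent of \<rho>: deleting the links of a non-isolated player shrinks the extent,
   so two rules with balanced contributions differ by a constant on each component
   of the extent, and component balance forces that constant to be zero. *)

lemma sum_Pow_insert:
  assumes "finite A" "a \<notin> A"
  shows "(\<Sum>X\<in>Pow (insert a A). f X) = (\<Sum>X\<in>Pow A. f X) + (\<Sum>X\<in>Pow A. f (insert a X))"
proof -
  have "inj_on (insert a) (Pow A)"
    using assms(2) by (intro inj_onI) (metis PowD insert_ident subsetD)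
  moreover have "Pow A \<inter> insert a ` Pow A = {}" using assms(2) by auto
  ultimately show ?thesis
    unfolding Pow_insert using assms(1) by (simp add: sum.union_disjoint sum.reindex)
qed

lemma sum_Pow_split:
  assumes "finite X" "G \<subseteq> X"
  shows "(\<Sum>f\<in>Pow X. F f) = (\<Sum>g\<in>Pow G. \<Sum>h\<in>Pow (X - G). F (g \<union> h))"
proof -
  have "bij_betw (\<lambda>(g, h). g \<union> h) (Pow G \<times> Pow (X - G)) (Pow X)"
    by (rule bij_betw_byWitness[where f' = "\<lambda>f. (f \<inter> G, f - G)"]) (use assms(2) in auto)
  then have "(\<Sum>f\<in>Pow X. F f) = (\<Sum>(g, h)\<in>Pow G \<times> Pow (X - G). F (g \<union> h))"
    by (simp add: sum.reindex_bij_betw[symmetric] case_prod_unfold)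
  then show ?thesis by (simp add: sum.cartesian_product)
qed

lemma sum_Pow_Diff_singleton:
  fixes F :: "'a::finite set \<Rightarrow> 'b::comm_semiring_1"
  shows "(\<Sum>i\<in>UNIV. \<Sum>S\<in>Pow (UNIV - {i}). F S) = (\<Sum>S\<in>UNIV. of_nat (card (UNIV :: 'a set) - card S) * F S)"
proof -
  have "(\<Sum>i\<in>UNIV. \<Sum>S\<in>Pow (UNIV - {i}). F S) = (\<Sum>i\<in>UNIV. \<Sum>S\<in>{S \<in> UNIV. i \<notin> S}. F S)"
    by (intro sum.cong) auto
  also have "\<dots> = (\<Sum>S\<in>UNIV. \<Sum>i\<in>{i \<in> UNIV. i \<notin> S}. F S)"
    by (rule sum.swap_restrict) simp_all
  also have "\<dots> = (\<Sum>S\<in>UNIV. of_nat (card (UNIV :: 'a set) - card S) * F S)"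
  proof (intro sum.cong refl)
    fix S :: "'a set"
    have "{i \<in> UNIV. i \<notin> S} = UNIV - S" by blast
    then show "(\<Sum>i\<in>{i \<in> UNIV. i \<notin> S}. F S) = of_nat (card (UNIV :: 'a set) - card S) * F S"
      by (simp add: card_Diff_subset)
  qed
  finally show ?thesis .
qed

lemma sum_Pow_Diff_singleton_insert:
  fixes F :: "'a::finite set \<Rightarrow> 'b::comm_semiring_1"
  shows "(\<Sum>i\<in>UNIV. \<Sum>S\<in>Pow (UNIV - {i}). F (insert i S)) = (\<Sum>T\<in>UNIV. of_nat (card T) * F T)"
proof -
  have bij: "bij_betw (insert i) (Pow (UNIV - {i})) {T \<in> UNIV. i \<in> T}" for i :: 'a
    by (rule bij_betw_byWitness[where f' = "\<lambda>T. T - {i}"]) auto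
  have "(\<Sum>i\<in>UNIV. \<Sum>S\<in>Pow (UNIV - {i}). F (insert i S))
      = (\<Sum>i\<in>UNIV. \<Sum>T\<in>{T \<in> UNIV. i \<in> T}. F T)"
    by (intro sum.cong refl sum.reindex_bij_betw bij)
  also have "\<dots> = (\<Sum>T\<in>UNIV. \<Sum>i\<in>{i \<in> UNIV. i \<in> T}. F T)"
    by (rule sum.swap_restrict) simp_all
  also have "\<dots> = (\<Sum>T\<in>UNIV. of_nat (card T) * F T)"
    by simp
  finally show ?thesis .
qed

section \<open>Networks and components\<close>

lemma mem_players_iff: "i \<in> players g \<longleftrightarrow> (\<exists>j. j \<noteq> i \<and> {i, j} \<in> g)"
  unfolding players_def nbrs_def by (auto simp: insert_commute)

lemma players_mono: "g \<subseteq> h \<Longrightarrow> players g \<subseteq> players h"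
  unfolding players_def nbrs_def by blast

lemma finite_gN: "finite (gN :: 'a::finite set set)"
  by (rule finite_subset[of _ "Pow UNIV"]) auto

lemma link_through_player:
  assumes "l \<in> gN" "i \<in> l"
  obtains j where "j \<noteq> i" "l = {i, j}"
proof -
  have "\<exists>j. j \<noteq> i \<and> l = {i, j}"
    using assms unfolding gN_def by (auto simp: insert_commute)
  then show thesis using that by blast
qed

lemma ex_mem_link: "l \<in> gN \<Longrightarrow> \<exists>i. i \<in> l"
  unfolding gN_def by auto

lemma mem_players_if_mem_link:
  assumes "g \<subseteq> gN" "l \<in> g" "i \<in> l"
  shows "i \<in> players g"
  using assms by (metis link_through_player mem_players_iff subsetD)

lemma restr_subset: "restr g S \<subseteq> g"
  unfolding restr_def by auto

lemma restr_UNIV: "g \<subseteq> gN \<Longrightarrow> restr g UNIV = g"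
  unfolding restr_def gN_def by blast

lemma restr_empty: "restr g {} = {}"
  unfolding restr_def by auto

lemma restr_insert_nonplayer:
  assumes "g \<subseteq> gN" "i \<notin> players g"
  shows "restr g (insert i S) = restr g S"
proof -
  have "(\<exists>a b. l = {a, b} \<and> a \<in> insert i S \<and> b \<in> insert i S) \<longleftrightarrow>
      (\<exists>a b. l = {a, b} \<and> a \<in> S \<and> b \<in> S)" if "i \<notin> l" for l
    using that by blast
  moreover have "i \<notin> l" if "l \<in> g" for l
    using mem_players_if_mem_link[OF assms(1) that] assms(2) by blast
  ultimately show ?thesis
    unfolding restr_def by blast
qed

lemma mem_links_of_gN_iff: "l \<in> links_of gN j \<longleftrightarrow> l \<in> gN \<and> j \<in> l"
  unfolding links_of_def by (auto elim: link_through_player)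

lemma restr_delete_links:
  assumes "g \<subseteq> gN"
  shows "restr (g \<inter> (gN - links_of gN j)) S = restr g (S - {j})"
proof -
  have in_S: "(\<exists>a b. l = {a, b} \<and> a \<in> S - {j} \<and> b \<in> S - {j}) \<longleftrightarrow>
      j \<notin> l \<and> (\<exists>a b. l = {a, b} \<and> a \<in> S \<and> b \<in> S)" for l :: "'a set"
    by auto
  have "l \<in> gN - links_of gN j \<longleftrightarrow> j \<notin> l" if "l \<in> g" for l
    using that assms by (auto simp: mem_links_of_gN_iff)
  then show ?thesis
    unfolding restr_def by (intro Collect_cong) (simp only: Int_iff in_S, blast)
qed

lemma comps_subset: "c \<in> comps g \<Longrightarrow> c \<subseteq> g"
  unfolding comps_def is_component_def by blast

lemma finite_comps: "g \<subseteq> gN \<Longrightarrow> finite (comps (g :: 'a::finite set set))"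
  by (metis comps_subset finite_Pow_iff finite_gN finite_subset PowI subsetI)

lemma comp_link_closed:
  assumes "h \<in> comps g" "g \<subseteq> gN" "l \<in> g" "i \<in> l" "i \<in> players h"
  shows "l \<in> h"
proof -
  have "\<forall>i\<in>players h. \<forall>j. j \<noteq> i \<and> {i, j} \<in> g \<longrightarrow> {i, j} \<in> h"
    using assms(1) unfolding comps_def is_component_def by simp
  moreover obtain j where "j \<noteq> i" "l = {i, j}"
    using link_through_player subsetD[OF assms(2,3)] assms(4) by metis
  ultimately show ?thesis
    using assms(3,5) by blast
qed

lemma sym_adj: "sym (adj h)"
  unfolding adj_def sym_def by (auto simp: insert_commute)

lemma connected_subset_of_disjoint_Un:
  assumes c: "net_connected c" "c \<subseteq> A \<union> B" "l \<in> c" "l \<in> A"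
    and AB: "A \<subseteq> gN" "B \<subseteq> gN" "players A \<inter> players B = {}"
  shows "c \<subseteq> A"
proof
  have cg: "c \<subseteq> gN" using c(2) AB(1,2) by blast
  obtain a where "a \<in> l" using ex_mem_link[OF subsetD[OF AB(1) c(4)]] by blast
  then have a: "a \<in> players c" "a \<in> players A"
    using mem_players_if_mem_link[OF cg c(3)] mem_players_if_mem_link[OF AB(1) c(4)] by auto
  have reach: "x \<in> players A" if "(a, x) \<in> (adj c)\<^sup>*" for x
    using that
  proof (induction rule: rtrancl_induct)
    case base
    show ?case using a(2) .
  next
    case (step y z)
    then have yz: "y \<noteq> z" "{y, z} \<in> c" unfolding adj_def by auto
    have "y \<notin> players B" using step.IH AB(3) by blast
    then have "{y, z} \<notin> B" using yz(1) by (auto simp: mem_players_iff)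
    then have "{z, y} \<in> A" using yz(2) c(2) by (auto simp: insert_commute)
    then show ?case using yz(1) mem_players_iff[of z A] by blast
  qed
  fix l' assume l': "l' \<in> c"
  obtain p where p: "p \<in> l'" using ex_mem_link[OF subsetD[OF cg l']] by blast
  then have "(a, p) \<in> (adj c)\<^sup>*"
    using c(1) a(1) mem_players_if_mem_link[OF cg l' p] unfolding net_connected_def by blast
  then have "p \<in> players A" by (rule reach)
  moreover have "l' \<in> B \<Longrightarrow> p \<in> players B"
    using mem_players_if_mem_link[OF AB(2) _ p] by blast
  ultimately show "l' \<in> A" using l' c(2) AB(3) by blast
qed

lemma comps_Un_disjoint:
  assumes AB: "A \<subseteq> gN" "B \<subseteq> gN" "players A \<inter> players B = {}"
  shows "comps (A \<union> B) = comps A \<union> comps B"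
proof (intro equalityI subsetI)
  fix c assume "c \<in> comps (A \<union> B)"
  then have c: "c \<noteq> {}" "c \<subseteq> A \<union> B" "net_connected c"
    "\<forall>i\<in>players c. \<forall>j. j \<noteq> i \<and> {i, j} \<in> A \<union> B \<longrightarrow> {i, j} \<in> c"
    unfolding comps_def is_component_def by auto
  obtain l where "l \<in> c" using c(1) by blast
  then have "c \<subseteq> A \<or> c \<subseteq> B"
    using connected_subset_of_disjoint_Un[OF c(3,2) _ _ AB]
      connected_subset_of_disjoint_Un[of c B A, OF c(3) _ _ _ AB(2,1)] c(2) AB(3)
    by (auto simp: Un_commute Int_commute)
  then show "c \<in> comps A \<union> comps B"
    using c unfolding comps_def is_component_def by auto
next
  have closed: "c \<in> comps (A' \<union> B')"
    if c: "c \<in> comps A'" and disj: "players A' \<inter> players B' = {}" for c A' B' :: "'a set set"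
  proof -
    have "{i, j} \<in> c" if "i \<in> players c" "j \<noteq> i" "{i, j} \<in> A' \<union> B'" for i j
    proof -
      have "i \<in> players A'" using that(1) players_mono[OF comps_subset[OF c]] by blast
      then have "i \<notin> players B'" using disj by blast
      then have "{i, j} \<notin> B'" using that(2) by (auto simp: mem_players_iff)
      then show ?thesis using c that unfolding comps_def is_component_def by auto
    qed
    then show ?thesis using c unfolding comps_def is_component_def by auto
  qed
  fix c assume "c \<in> comps A \<union> comps B"
  then show "c \<in> comps (A \<union> B)"
    using closed[of c A B] closed[of c B A] AB(3) by (auto simp: Un_commute Int_commute)
qed

lemma comp_additive_Un_disjoint:
  fixes A B :: "'a::finite set set"
  assumes v: "comp_additive v" and AB: "A \<subseteq> gN" "B \<subseteq> gN" "players A \<inter> players B = {}"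
  shows "v (A \<union> B) = v A + v B"
proof -
  have disj: "comps A \<inter> comps B = {}"
  proof (rule ccontr)
    assume "comps A \<inter> comps B \<noteq> {}"
    then obtain c l where "c \<in> comps A" "c \<in> comps B" "l \<in> c"
      unfolding comps_def is_component_def by blast
    then have l: "l \<in> A" "l \<in> B" using comps_subset by blast+
    obtain i where "i \<in> l" using ex_mem_link[OF subsetD[OF AB(1) l(1)]] by blast
    then have "i \<in> players A" "i \<in> players B"
      using mem_players_if_mem_link[OF AB(1) l(1)] mem_players_if_mem_link[OF AB(2) l(2)] by auto
    then show False using AB(3) by blast
  qed
  have "v (A \<union> B) = (\<Sum>h\<in>comps (A \<union> B). v h)"
    using v AB(1,2) unfolding comp_additive_def by simp
  also have "\<dots> = (\<Sum>h\<in>comps A. v h) + (\<Sum>h\<in>comps B. v h)"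
    unfolding comps_Un_disjoint[OF AB]
    by (rule sum.union_disjoint) (use finite_comps AB disj in auto)
  also have "\<dots> = v A + v B"
    using v AB(1,2) unfolding comp_additive_def by simp
  finally show ?thesis .
qed

lemma ex_comp_containing_player:
  assumes E: "E \<subseteq> gN" and i: "i \<in> players E"
  obtains h where "h \<in> comps E" "i \<in> players h"
proof -
  define h where "h = {l \<in> E. \<exists>a\<in>l. (i, a) \<in> (adj E)\<^sup>*}"
  have reach_h: "(i, x) \<in> (adj h)\<^sup>*" if "(i, x) \<in> (adj E)\<^sup>*" for x
    using that
  proof (induction rule: rtrancl_induct)
    case (step y z)
    then have "(y, z) \<in> adj h" unfolding adj_def h_def by auto
    with step.IH show ?case by (rule rtrancl_into_rtrancl)
  qed simp
  have reach_E: "(i, p) \<in> (adj E)\<^sup>*" if p: "p \<in> players h" for p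
  proof -
    obtain q where q: "q \<noteq> p" "{p, q} \<in> E" "(i, p) \<in> (adj E)\<^sup>* \<or> (i, q) \<in> (adj E)\<^sup>*"
      using p unfolding mem_players_iff h_def by blast
    have "(q, p) \<in> adj E" using q(1,2) unfolding adj_def by (simp add: insert_commute)
    then show ?thesis using q(3) by (meson rtrancl_into_rtrancl)
  qed
  obtain k where k: "k \<noteq> i" "{i, k} \<in> E" using i unfolding mem_players_iff by blast
  then have ik: "{i, k} \<in> h" unfolding h_def by blast
  have "net_connected h"
    unfolding net_connected_def
    by (metis reach_E reach_h rtrancl_trans sym_adj sym_rtrancl symD)
  then have "h \<in> comps E"
    using ik reach_E unfolding comps_def is_component_def h_def by auto
  moreover have "i \<in> players h" using k(1) ik unfolding mem_players_iff by blast
  ultimately show thesis by (rule that)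
qed

section \<open>The Shapley value\<close>

definition shapley_weight :: "nat \<Rightarrow> nat \<Rightarrow> real" where
  "shapley_weight n s = fact s * fact (n - s - 1) / fact n"

definition shapley :: "('a::finite set \<Rightarrow> real) \<Rightarrow> 'a \<Rightarrow> real" where
  "shapley u i = (\<Sum>S\<in>Pow (UNIV - {i}).
     shapley_weight (card (UNIV :: 'a set)) (card S) * (u (insert i S) - u S))"

lemma shapley_add: "shapley (\<lambda>S. u S + w S) i = shapley u i + shapley w i"
  unfolding shapley_def by (simp add: sum.distrib[symmetric] algebra_simps)

lemma shapley_null_player: "(\<And>S. u (insert i S) = u S) \<Longrightarrow> shapley u i = 0"
  unfolding shapley_def by simp

(* The coefficient of u T in the sum of all Shapley values: T occurs as insert i S for the
   card T players i in T and as S for the n - card T players outside T. *)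
lemma shapley_weight_telescope:
  assumes "s \<le> n" "0 < n"
  shows "real s * shapley_weight n (s - 1) - real (n - s) * shapley_weight n s
        = (if s = n then 1 else 0) - (if s = 0 then 1 else 0)"
proof -
  have fn: "fact n = real n * fact (n - 1)" using fact_reduce[OF assms(2)] by simp
  consider "s = 0" | "s = n" | "0 < s" "s < n" using assms by linarith
  then show ?thesis
  proof cases
    case 1
    then show ?thesis using assms unfolding shapley_weight_def by (simp add: fn field_simps)
  next
    case 2
    then have "n - (s - 1) - 1 = 0" using assms by simp
    then show ?thesis using 2 assms unfolding shapley_weight_def by (simp add: fn field_simps)
  next
    case 3
    have "n - (s - 1) - 1 = n - s" using 3 by simp
    moreover have fact_ns: "(fact (n - s) :: real) = real (n - s) * fact (n - s - 1)"
      using 3 by (metis fact_reduce zero_less_diff)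
    moreover have fact_s: "(fact s :: real) = real s * fact (s - 1)"
      using fact_reduce[of s] 3 by simp
    ultimately show ?thesis
      using 3 unfolding shapley_weight_def by (simp add: fact_ns fact_s field_simps)
  qed
qed

lemma shapley_efficient:
  fixes u :: "'a::finite set \<Rightarrow> real"
  shows "(\<Sum>i\<in>UNIV. shapley u i) = u UNIV - u {}"
proof -
  let ?n = "card (UNIV :: 'a set)"
  let ?w = "shapley_weight ?n"
  let ?joined = "\<lambda>T. ?w (card T - 1) * u T" and ?left = "\<lambda>S. ?w (card S) * u S"
  have joined: "?w (card S) * u (insert i S) = ?joined (insert i S)" if "S \<in> Pow (UNIV - {i})" for i S
  proof -
    have "i \<notin> S" using that by blast
    then show ?thesis by simp
  qed
  have "(\<Sum>i\<in>UNIV. shapley u i)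
      = (\<Sum>i\<in>UNIV. \<Sum>S\<in>Pow (UNIV - {i}). ?w (card S) * u (insert i S))
        - (\<Sum>i\<in>UNIV. \<Sum>S\<in>Pow (UNIV - {i}). ?left S)"
    unfolding shapley_def by (simp add: sum_subtractf right_diff_distrib)
  also have "\<dots> = (\<Sum>i\<in>UNIV. \<Sum>S\<in>Pow (UNIV - {i}). ?joined (insert i S))
        - (\<Sum>i\<in>UNIV. \<Sum>S\<in>Pow (UNIV - {i}). ?left S)"
    by (simp only: joined cong: sum.cong)
  also have "\<dots> = (\<Sum>T\<in>UNIV. (real (card T) * ?w (card T - 1) - real (?n - card T) * ?w (card T)) * u T)"
    unfolding sum_Pow_Diff_singleton_insert[of ?joined] sum_Pow_Diff_singleton[of ?left]
    by (simp add: sum_subtractf left_diff_distrib mult.assoc)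
  also have "\<dots> = (\<Sum>T\<in>UNIV. (if T = UNIV then u T else 0) - (if T = {} then u T else 0))"
  proof (intro sum.cong refl)
    fix T :: "'a set"
    have "card T \<le> ?n" "0 < ?n" by (simp_all add: card_mono card_gt_0_iff)
    moreover have "card T = ?n \<longleftrightarrow> T = UNIV" using card_subset_eq[of UNIV T] by auto
    ultimately have "real (card T) * ?w (card T - 1) - real (?n - card T) * ?w (card T)
        = (if T = UNIV then 1 else 0) - (if T = {} then 1 else 0)"
      using shapley_weight_telescope[of "card T" ?n] by simp
    then show "(real (card T) * ?w (card T - 1) - real (?n - card T) * ?w (card T)) * u T
        = (if T = UNIV then u T else 0) - (if T = {} then u T else 0)"
      by simp
  qed
  also have "\<dots> = u UNIV - u {}"
    by (simp add: sum_subtractf)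
  finally show ?thesis .
qed

lemma shapley_delete_player:
  fixes u :: "'a::finite set \<Rightarrow> real"
  assumes "i \<noteq> j"
  shows "shapley u i - shapley (\<lambda>S. u (S - {j})) i
    = (\<Sum>T\<in>Pow (UNIV - {i, j}). shapley_weight (card (UNIV :: 'a set)) (Suc (card T)) *
        (u (insert i (insert j T)) - u (insert i T) - u (insert j T) + u T))"
proof -
  let ?w = "shapley_weight (card (UNIV :: 'a set))"
  let ?d = "\<lambda>S. ?w (card S) * (u (insert i S) - u S - (u (insert i S - {j}) - u (S - {j})))"
  have "UNIV - {i} = insert j (UNIV - {i, j})" using assms by auto
  then have "shapley u i - shapley (\<lambda>S. u (S - {j})) i
      = (\<Sum>T\<in>Pow (UNIV - {i, j}). ?d T) + (\<Sum>T\<in>Pow (UNIV - {i, j}). ?d (insert j T))"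
    unfolding shapley_def by (simp add: sum_Pow_insert sum_subtractf right_diff_distrib)
  also have "(\<Sum>T\<in>Pow (UNIV - {i, j}). ?d T) = 0"
    using assms by (intro sum.neutral ballI) (auto simp: subset_Diff_insert insert_Diff_if)
  also have "(\<Sum>T\<in>Pow (UNIV - {i, j}). ?d (insert j T))
      = (\<Sum>T\<in>Pow (UNIV - {i, j}). ?w (Suc (card T)) *
          (u (insert i (insert j T)) - u (insert i T) - u (insert j T) + u T))"
  proof (intro sum.cong refl)
    fix T assume "T \<in> Pow (UNIV - {i, j})"
    then have "i \<notin> T" "j \<notin> T" by auto
    then show "?d (insert j T) = ?w (Suc (card T)) *
        (u (insert i (insert j T)) - u (insert i T) - u (insert j T) + u T)"
      using assms by (simp add: insert_Diff_if insert_commute algebra_simps)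
  qed
  finally show ?thesis by simp
qed

lemma shapley_balanced_contributions:
  fixes u :: "'a::finite set \<Rightarrow> real"
  assumes "i \<noteq> j"
  shows "shapley u i - shapley (\<lambda>S. u (S - {j})) i = shapley u j - shapley (\<lambda>S. u (S - {i})) j"
  unfolding shapley_delete_player[OF assms] shapley_delete_player[OF assms[symmetric]]
  by (simp add: insert_commute algebra_simps)

section \<open>The Myerson value\<close>

lemma myerson_eq_shapley: "myerson v g i = shapley (\<lambda>S. v (restr g S)) i"
  unfolding myerson_def shapley_def shapley_weight_def by simp

lemma myerson_nonplayer:
  assumes "g \<subseteq> gN" "i \<notin> players g"
  shows "myerson v g i = 0"
  unfolding myerson_eq_shapley
  by (rule shapley_null_player) (simp add: restr_insert_nonplayer[OF assms])

lemma myerson_component_efficient: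
  fixes g h :: "'a::finite set set"
  assumes v: "comp_additive v" "is_game v" and g: "g \<subseteq> gN"
    and closed: "\<And>l i. l \<in> g \<Longrightarrow> i \<in> l \<Longrightarrow> i \<in> players h \<Longrightarrow> l \<in> h"
  shows "(\<Sum>i\<in>players h. myerson v g i) = v (g \<inter> h)"
proof -
  let ?inside = "\<lambda>S. v (restr (g \<inter> h) S)" and ?outside = "\<lambda>S. v (restr (g - h) S)"
  have gh: "g \<inter> h \<subseteq> gN" "g - h \<subseteq> gN" using g by blast+
  have inside_players: "players (g \<inter> h) \<subseteq> players h" by (rule players_mono) blast
  have outside_players: "i \<notin> players (g - h)" if "i \<in> players h" for i
    using closed[of _ i] that by (auto simp: mem_players_iff)
  have split: "v (restr g S) = ?inside S + ?outside S" for S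
  proof -
    have "players (restr (g \<inter> h) S) \<inter> players (restr (g - h) S) = {}"
      using players_mono[OF restr_subset, of "g \<inter> h" S] players_mono[OF restr_subset, of "g - h" S]
        inside_players outside_players by blast
    moreover have "restr g S = restr (g \<inter> h) S \<union> restr (g - h) S"
      unfolding restr_def by blast
    ultimately show ?thesis
      using comp_additive_Un_disjoint[OF v(1)] restr_subset gh by (metis subset_trans)
  qed
  have "(\<Sum>i\<in>players h. myerson v g i) = (\<Sum>i\<in>players h. shapley ?inside i)"
  proof (intro sum.cong refl)
    fix i assume "i \<in> players h"
    then have "shapley ?outside i = 0"
      by (intro shapley_null_player) (simp add: restr_insert_nonplayer gh outside_players)
    then show "myerson v g i = shapley ?inside i"
      unfolding myerson_eq_shapley split shapley_add by simp
  qed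
  also have "\<dots> = (\<Sum>i\<in>UNIV. shapley ?inside i)"
  proof (rule sum.mono_neutral_left)
    show "\<forall>i\<in>UNIV - players h. shapley ?inside i = 0"
    proof
      fix i assume "i \<in> UNIV - players h"
      then have "i \<notin> players (g \<inter> h)" using inside_players by blast
      then show "shapley ?inside i = 0"
        by (intro shapley_null_player) (simp add: restr_insert_nonplayer gh)
    qed
  qed simp_all
  also have "\<dots> = v (g \<inter> h)"
    using v(2) unfolding shapley_efficient is_game_def by (simp add: restr_UNIV gh restr_empty)
  finally show ?thesis .
qed

lemma myerson_balanced_contributions:
  assumes "g \<subseteq> gN" "i \<noteq> j"
  shows "myerson v g i - myerson v (g \<inter> (gN - links_of gN j)) i
    = myerson v g j - myerson v (g \<inter> (gN - links_of gN i)) j"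
  unfolding myerson_eq_shapley restr_delete_links[OF assms(1)]
  by (rule shapley_balanced_contributions[OF assms(2)])

lemma finite_Pow_gN: "finite (Pow (gN :: 'a::finite set set))"
  using finite_gN by blast

lemma prob_nonneg: "is_prob \<rho> \<Longrightarrow> 0 \<le> \<rho> g"
  unfolding is_prob_def by blast

lemma supp_subset_Pow_gN: "is_prob \<rho> \<Longrightarrow> supp \<rho> \<subseteq> Pow gN"
  unfolding is_prob_def supp_def by force

lemma extent_subset_gN: "is_prob \<rho> \<Longrightarrow> extent \<rho> \<subseteq> gN"
  using supp_subset_Pow_gN unfolding extent_def by blast

lemma subset_extent: "is_prob \<rho> \<Longrightarrow> \<rho> g \<noteq> 0 \<Longrightarrow> g \<subseteq> extent \<rho>"
  using prob_nonneg[of \<rho> g] unfolding extent_def supp_def by force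

lemma sum_restr_prob:
  fixes \<rho> :: "'a::finite set set \<Rightarrow> real"
  assumes G: "G \<subseteq> gN"
  shows "(\<Sum>g\<in>Pow gN. restr_prob \<rho> G g * F g) = (\<Sum>f\<in>Pow gN. \<rho> f * F (f \<inter> G))"
proof -
  have "(\<Sum>g\<in>Pow gN. restr_prob \<rho> G g * F g) = (\<Sum>g\<in>Pow G. restr_prob \<rho> G g * F g)"
    by (rule sum.mono_neutral_right) (use finite_Pow_gN G in \<open>auto simp: restr_prob_def\<close>)
  also have "\<dots> = (\<Sum>g\<in>Pow G. \<Sum>h\<in>Pow (gN - G). \<rho> (g \<union> h) * F ((g \<union> h) \<inter> G))"
  proof (intro sum.cong refl)
    fix g assume "g \<in> Pow G"
    then have "(g \<union> h) \<inter> G = g" if "h \<in> Pow (gN - G)" for h using that by auto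
    then show "restr_prob \<rho> G g * F g = (\<Sum>h\<in>Pow (gN - G). \<rho> (g \<union> h) * F ((g \<union> h) \<inter> G))"
      using \<open>g \<in> Pow G\<close> unfolding restr_prob_def by (simp add: sum_distrib_right)
  qed
  also have "\<dots> = (\<Sum>f\<in>Pow gN. \<rho> f * F (f \<inter> G))"
    by (rule sum_Pow_split[symmetric]) (use finite_gN G in auto)
  finally show ?thesis .
qed

lemma is_prob_restr_prob:
  fixes \<rho> :: "'a::finite set set \<Rightarrow> real"
  assumes p: "is_prob \<rho>" and G: "G \<subseteq> gN"
  shows "is_prob (restr_prob \<rho> G)"
proof -
  have nonneg: "0 \<le> restr_prob \<rho> G h" for h
    unfolding restr_prob_def by (auto intro!: sum_nonneg simp: prob_nonneg[OF p])
  have outside: "restr_prob \<rho> G h = 0" if "\<not> h \<subseteq> gN" for h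
    using that G unfolding restr_prob_def by auto
  have total: "(\<Sum>g\<in>Pow gN. restr_prob \<rho> G g) = 1"
    using sum_restr_prob[OF G, of \<rho> "\<lambda>_. 1"] p unfolding is_prob_def by simp
  have "restr_prob \<rho> G h \<le> 1" for h
  proof (cases "h \<subseteq> gN")
    case True
    then show ?thesis
      using member_le_sum[of h "Pow gN" "restr_prob \<rho> G"] nonneg finite_Pow_gN total by simp
  qed (simp add: outside)
  then show ?thesis
    unfolding is_prob_def using nonneg outside total by blast
qed

lemma extent_restr_prob_subset:
  assumes p: "is_prob \<rho>"
  shows "extent (restr_prob \<rho> G) \<subseteq> extent \<rho> \<inter> G"
proof
  fix l assume "l \<in> extent (restr_prob \<rho> G)"
  then obtain g where g: "restr_prob \<rho> G g > 0" "l \<in> g" unfolding extent_def supp_def by blast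
  then have "g \<subseteq> G" unfolding restr_prob_def by (auto split: if_splits)
  with g(1) have "(\<Sum>h\<in>Pow (gN - G). \<rho> (g \<union> h)) > 0" unfolding restr_prob_def by simp
  then obtain h where "\<rho> (g \<union> h) \<noteq> 0" by (metis less_irrefl sum.neutral)
  then have "l \<in> extent \<rho>" using subset_extent[OF p] g(2) by blast
  then show "l \<in> extent \<rho> \<inter> G" using \<open>g \<subseteq> G\<close> g(2) by blast
qed

lemma card_extent_minus_player_less:
  fixes \<rho> :: "'a::finite set set \<Rightarrow> real"
  assumes p: "is_prob \<rho>" and j: "j \<in> players (extent \<rho>)"
  shows "card (extent (minus_player \<rho> j)) < card (extent \<rho>)"
proof -
  obtain k where k: "k \<noteq> j" "{j, k} \<in> extent \<rho>" using j unfolding mem_players_iff by blast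
  then have "{j, k} \<in> links_of gN j" using extent_subset_gN[OF p] unfolding links_of_def by blast
  then have "extent (minus_player \<rho> j) \<subset> extent \<rho>"
    using extent_restr_prob_subset[OF p] k(2) unfolding minus_player_def by blast
  then show ?thesis
    using extent_subset_gN[OF p] finite_gN by (meson psubset_card_mono rev_finite_subset)
qed

section \<open>The Expected Myerson Value\<close>

lemma EMV_isolated:
  fixes \<rho> :: "'a::finite set set \<Rightarrow> real"
  assumes p: "is_prob \<rho>" and i: "i \<in> isolated (extent \<rho>)"
  shows "EMV v \<rho> i = 0"
  unfolding EMV_def
proof (intro sum.neutral ballI)
  fix g :: "'a set set" assume g: "g \<in> Pow gN"
  show "\<rho> g * myerson v g i = 0"
  proof (cases "\<rho> g = 0")
    case False
    then have "i \<notin> players g"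
      using subset_extent[OF p] players_mono i unfolding isolated_def by blast
    then show ?thesis using g by (simp add: myerson_nonplayer)
  qed simp
qed

lemma alloc_rule_EMV: "alloc_rule EMV"
  unfolding alloc_rule_def using EMV_isolated by blast

lemma comp_balanced_EMV:
  fixes \<rho> :: "'a::finite set set \<Rightarrow> real"
  assumes v: "comp_additive v" "is_game v" and p: "is_prob \<rho>"
  shows "comp_balanced EMV v \<rho>"
  unfolding comp_balanced_def
proof
  fix h assume h: "h \<in> comps (extent \<rho>)"
  have "(\<Sum>i\<in>players h. EMV v \<rho> i) = (\<Sum>g\<in>Pow gN. \<rho> g * (\<Sum>i\<in>players h. myerson v g i))"
    unfolding EMV_def by (simp add: sum_distrib_left sum.swap[of _ "players h"])
  also have "\<dots> = (\<Sum>g\<in>Pow gN. \<rho> g * v (g \<inter> h))"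
  proof (intro sum.cong refl)
    fix g :: "'a set set" assume g: "g \<in> Pow gN"
    show "\<rho> g * (\<Sum>i\<in>players h. myerson v g i) = \<rho> g * v (g \<inter> h)"
    proof (cases "\<rho> g = 0")
      case False
      then have "g \<subseteq> extent \<rho>" by (rule subset_extent[OF p])
      then have "(\<Sum>i\<in>players h. myerson v g i) = v (g \<inter> h)"
        using g comp_link_closed[OF h extent_subset_gN[OF p]]
        by (intro myerson_component_efficient[OF v]) auto
      then show ?thesis by simp
    qed simp
  qed
  also have "\<dots> = (\<Sum>g\<in>supp \<rho>. \<rho> g * v (g \<inter> h))"
    using supp_subset_Pow_gN[OF p] finite_Pow_gN prob_nonneg[OF p]
    by (intro sum.mono_neutral_right) (auto simp: supp_def less_eq_real_def)
  finally show "(\<Sum>i\<in>players h. EMV v \<rho> i) = (\<Sum>g\<in>supp \<rho>. \<rho> g * v (g \<inter> h))" .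
qed

lemma EMV_minus_player:
  fixes \<rho> :: "'a::finite set set \<Rightarrow> real"
  shows "EMV v (minus_player \<rho> j) i
    = (\<Sum>g\<in>Pow gN. \<rho> g * myerson v (g \<inter> (gN - links_of gN j)) i)"
  unfolding EMV_def minus_player_def by (rule sum_restr_prob) blast

lemma bal_contrib_EMV: "bal_contrib EMV v \<rho>"
  unfolding bal_contrib_def
proof (intro allI impI)
  fix i j :: 'a assume ij: "i \<noteq> j"
  have diff: "EMV v \<rho> k - EMV v (minus_player \<rho> l) k
      = (\<Sum>g\<in>Pow gN. \<rho> g * (myerson v g k - myerson v (g \<inter> (gN - links_of gN l)) k))" for k l
    unfolding EMV_minus_player by (simp add: EMV_def sum_subtractf right_diff_distrib)
  show "EMV v \<rho> i - EMV v (minus_player \<rho> j) i = EMV v \<rho> j - EMV v (minus_player \<rho> i) j"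
    unfolding diff using myerson_balanced_contributions[OF _ ij] by (intro sum.cong refl) simp
qed

lemma domD_minus_player:
  fixes \<rho> :: "'a::finite set set \<Rightarrow> real"
  shows "(v, \<rho>) \<in> domD \<Longrightarrow> (v, minus_player \<rho> j) \<in> domD"
  using is_prob_restr_prob[of \<rho> "gN - links_of gN j"] unfolding domD_def minus_player_def by blast

lemma EMV_unique:
  fixes \<Psi> :: "'a::finite alloc"
  assumes alloc: "alloc_rule \<Psi>"
    and axioms: "\<forall>(v, \<rho>)\<in>domD. comp_balanced \<Psi> v \<rho> \<and> bal_contrib \<Psi> v \<rho>"
  shows "(v, \<rho>) \<in> domD \<Longrightarrow> \<Psi> v \<rho> = EMV v \<rho>"
proof (induction "card (extent \<rho>)" arbitrary: \<rho> rule: less_induct)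
  case less
  have p: "is_prob \<rho>" and v: "is_game v" "comp_additive v"
    using less.prems unfolding domD_def by auto
  have cb: "comp_balanced \<Psi> v \<rho>" and bc: "bal_contrib \<Psi> v \<rho>"
    using axioms less.prems by auto
  have IH: "\<Psi> v (minus_player \<rho> j) = EMV v (minus_player \<rho> j)" if "j \<in> players (extent \<rho>)" for j
    using less.hyps[OF card_extent_minus_player_less[OF p that] domD_minus_player[OF less.prems]] .
  define d where "d k = \<Psi> v \<rho> k - EMV v \<rho> k" for k
  have "d i = 0" for i
  proof (cases "i \<in> players (extent \<rho>)")
    case False
    then show ?thesis
      using alloc p v EMV_isolated[OF p] unfolding alloc_rule_def isolated_def d_def by auto
  next
    case True
    obtain h where h: "h \<in> comps (extent \<rho>)" "i \<in> players h"
      using ex_comp_containing_player[OF extent_subset_gN[OF p] True] by blast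
    have "d j = d i" if j: "j \<in> players h" for j
    proof (cases "j = i")
      case False
      have "j \<in> players (extent \<rho>)" using j players_mono[OF comps_subset[OF h(1)]] by blast
      then have "\<Psi> v \<rho> i - EMV v (minus_player \<rho> j) i = \<Psi> v \<rho> j - EMV v (minus_player \<rho> i) j"
        using bc False IH[OF True] IH unfolding bal_contrib_def by metis
      moreover have "EMV v \<rho> i - EMV v (minus_player \<rho> j) i = EMV v \<rho> j - EMV v (minus_player \<rho> i) j"
        using bal_contrib_EMV False unfolding bal_contrib_def by metis
      ultimately show ?thesis unfolding d_def by simp
    qed simp
    then have "(\<Sum>k\<in>players h. d k) = real (card (players h)) * d i" by simp
    moreover have "(\<Sum>k\<in>players h. d k) = 0"
      using cb comp_balanced_EMV[OF v(2,1) p] h(1)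
      unfolding comp_balanced_def d_def by (auto simp: sum_subtractf)
    ultimately show ?thesis using h(2) by auto
  qed
  then show ?case unfolding d_def by auto
qed

theorem mainTheorem2:
  shows "(alloc_rule (EMV :: 'a::finite alloc) \<and>
           (\<forall>(v, \<rho>)\<in>(domD :: (('a set set \<Rightarrow> real) \<times> ('a set set \<Rightarrow> real)) set).
              comp_balanced EMV v \<rho> \<and> bal_contrib EMV v \<rho>))
       \<and> (\<forall>\<Psi> :: 'a alloc. alloc_rule \<Psi> \<and>
              (\<forall>(v, \<rho>)\<in>domD. comp_balanced \<Psi> v \<rho> \<and> bal_contrib \<Psi> v \<rho>)
            \<longrightarrow> (\<forall>(v, \<rho>)\<in>domD. \<Psi> v \<rho> = EMV v \<rho>))"
  using alloc_rule_EMV comp_balanced_EMV bal_contrib_EMV EMV_unique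
  unfolding domD_def by blast

end
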